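(* In the linear deterministic diamond network with a disturbing node with gains $n_1,n_2,n_3,n_4,m$, suppose $n_1=n_2$ and $m<n_1$. Then the linear capacity is $C=\min\big(n_1-m,\ \max(n_3,n_4)\big)$.
   Context: The shift matrix $Q$ is the $q\times q$ matrix over $\mathbb{F}_2$ with $Q_{i+1,i}=1$ for $1\le i\le q-1$ and all other entries $0$, where $q=\max(n_1,n_2,n_3,n_4,m)$ and all gains are nonnegative integers. Network: source $S$, relays $A,B$, destination $D$, disturbing node $M$; gains $n_1$ ($S\to A$), $n_2$ ($S\to B$), $n_3$ ($A\to D$), $n_4$ ($B\to D$), $m$ ($M\to A$ and $M\to B$). Each node transmits $x_i\in\mathbb{F}_2^q$ and receives $y_j=\sum_{k:(k,j)\text{ an edge}}Q^{q-n_{(k,j)}}x_k$; relays use linear maps $x_A=G_Ay_A$, $x_B=G_By_B$ with $G_A,G_B$ arbitrary $q\times q$ matrices over $\mathbb{F}_2$. Then $y_D=G_Sx_S+G_Mx_M$ with $G_S=Q^{q-n_3}G_AQ^{q-n_1}+Q^{q-n_4}G_BQ^{q-n_2}$ and $G_M=Q^{q-n_3}G_AQ^{q-m}+Q^{q-n_4}G_BQ^{q-m}$. The rate $R(G_A,G_B)$ is the maximum dimension of a subspace $\mathcal{X}\subseteq\mathbb{F}_2^q$ such that for all $x_S,x_S'\in\mathcal{X}$, $x_M,x_M'\in\mathbb{F}_2^q$, $G_Sx_S+G_Mx_M=G_Sx_S'+G_Mx_M'$ implies $x_S=x_S'$. The linear capacity is $C=\max_{G_A,G_B}R(G_A,G_B)$.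 *)

theory Defs
  imports Complex_Main "HOL-Library.Z2" "HOL-Library.Function_Algebras"
begin

text \<open>Vectors in F_2^q are modelled as functions nat => bit vanishing outside {..<q};
  q x q matrices over F_2 as functions nat => nat => bit vanishing outside {..<q} x {..<q}.
  Indices are 0-based.\<close>

type_synonym f2vec = "nat \<Rightarrow> bit"
type_synonym f2mat = "nat \<Rightarrow> nat \<Rightarrow> bit"

definition vecs :: "nat \<Rightarrow> f2vec set" where
  "vecs q = {x. \<forall>i. q \<le> i \<longrightarrow> x i = 0}"

definition mats :: "nat \<Rightarrow> f2mat set" where
  "mats q = {A. \<forall>i j. q \<le> i \<or> q \<le> j \<longrightarrow> A i j = 0}"

definition scale2 :: "bit \<Rightarrow> f2vec \<Rightarrow> f2vec" where
  "scale2 c x = (\<lambda>i. c * x i)"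

definition mvec :: "nat \<Rightarrow> f2mat \<Rightarrow> f2vec \<Rightarrow> f2vec" where
  "mvec q A x = (\<lambda>i. if i < q then (\<Sum>j<q. A i j * x j) else 0)"

definition mmult :: "nat \<Rightarrow> f2mat \<Rightarrow> f2mat \<Rightarrow> f2mat" where
  "mmult q A B = (\<lambda>i j. if i < q \<and> j < q then (\<Sum>k<q. A i k * B k j) else 0)"

definition madd :: "f2mat \<Rightarrow> f2mat \<Rightarrow> f2mat" where
  "madd A B = (\<lambda>i j. A i j + B i j)"

definition idmat :: "nat \<Rightarrow> f2mat" where
  "idmat q = (\<lambda>i j. if i < q \<and> j < q \<and> i = j then 1 else 0)"

fun mpow :: "nat \<Rightarrow> f2mat \<Rightarrow> nat \<Rightarrow> f2mat" where
  "mpow q A 0 = idmat q"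
| "mpow q A (Suc k) = mmult q A (mpow q A k)"

text \<open>Shift matrix: Q_{i+1,i} = 1 (1-based), i.e. entry (j+1, j) = 1 for 0-based j with j+1 < q.\<close>
definition shiftQ :: "nat \<Rightarrow> f2mat" where
  "shiftQ q = (\<lambda>i j. if i < q \<and> j < q \<and> i = Suc j then 1 else 0)"

definition qdim :: "nat \<Rightarrow> nat \<Rightarrow> nat \<Rightarrow> nat \<Rightarrow> nat \<Rightarrow> nat" where
  "qdim n1 n2 n3 n4 m = Max {n1, n2, n3, n4, m}"

definition GS :: "nat \<Rightarrow> nat \<Rightarrow> nat \<Rightarrow> nat \<Rightarrow> nat \<Rightarrow> f2mat \<Rightarrow> f2mat \<Rightarrow> f2mat" where
  "GS n1 n2 n3 n4 m GA GB =
     (let q = qdim n1 n2 n3 n4 m; Q = shiftQ q in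
      madd (mmult q (mmult q (mpow q Q (q - n3)) GA) (mpow q Q (q - n1)))
           (mmult q (mmult q (mpow q Q (q - n4)) GB) (mpow q Q (q - n2))))"

definition GM :: "nat \<Rightarrow> nat \<Rightarrow> nat \<Rightarrow> nat \<Rightarrow> nat \<Rightarrow> f2mat \<Rightarrow> f2mat \<Rightarrow> f2mat" where
  "GM n1 n2 n3 n4 m GA GB =
     (let q = qdim n1 n2 n3 n4 m; Q = shiftQ q in
      madd (mmult q (mmult q (mpow q Q (q - n3)) GA) (mpow q Q (q - m)))
           (mmult q (mmult q (mpow q Q (q - n4)) GB) (mpow q Q (q - m))))"

definition good_subspace :: "nat \<Rightarrow> f2mat \<Rightarrow> f2mat \<Rightarrow> f2vec set \<Rightarrow> bool" where
  "good_subspace q Gs Gm X \<longleftrightarrow>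
     X \<subseteq> vecs q \<and> Modules.module.subspace scale2 X \<and>
     (\<forall>xs\<in>X. \<forall>xs'\<in>X. \<forall>xm\<in>vecs q. \<forall>xm'\<in>vecs q.
        mvec q Gs xs + mvec q Gm xm = mvec q Gs xs' + mvec q Gm xm' \<longrightarrow> xs = xs')"

definition rate :: "nat \<Rightarrow> nat \<Rightarrow> nat \<Rightarrow> nat \<Rightarrow> nat \<Rightarrow> f2mat \<Rightarrow> f2mat \<Rightarrow> nat" where
  "rate n1 n2 n3 n4 m GA GB =
     (let q = qdim n1 n2 n3 n4 m in
      Max {Vector_Spaces.vector_space.dim scale2 X | X.
             good_subspace q (GS n1 n2 n3 n4 m GA GB) (GM n1 n2 n3 n4 m GA GB) X})"

definition linear_capacity :: "nat \<Rightarrow> nat \<Rightarrow> nat \<Rightarrow> nat \<Rightarrow> nat \<Rightarrow> nat" where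
  "linear_capacity n1 n2 n3 n4 m =
     Max {rate n1 n2 n3 n4 m GA GB | GA GB.
            GA \<in> mats (qdim n1 n2 n3 n4 m) \<and> GB \<in> mats (qdim n1 n2 n3 n4 m)}"

end

theory Submission
  imports Defs
begin

text \<open>
  With \<open>n1 = n2\<close> both relays receive the source through the same shift \<open>Q^(q-n1)\<close>,
  while the disturbance \<open>Q^(q-m) x_M\<close> reaches exactly the source coordinates of index at
  least \<open>n1 - m\<close>. A source vector supported there produces the same signal at the
  destination as some disturbance, so a decodable subspace meets such vectors only in \<open>0\<close>:
  its projection to the first \<open>n1 - m\<close> coordinates is injective, giving \<open>dim \<le> n1 - m\<close>.
  The source signal itself must be injective on the subspace and lands in the last
  \<open>max n3 n4\<close> coordinates at the destination, giving the second bound. Conversely, the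
  relay with the larger outgoing gain forwards the first \<open>min (n1 - m) (max n3 n4)\<close> clean
  coordinates while the other relay stays silent; the disturbance is then cancelled entirely.
\<close>

text \<open>Keep \<open>bit\<close> addition and multiplication as ring operations instead of xor/and.\<close>
declare add_bit_eq_xor[simp del] mult_bit_eq_and[simp del]

lemma bit_add_self [simp]: "(a::bit) + a = 0"
  by (cases a) auto

lemma f2vec_add_self [simp]: "(x::f2vec) + x = 0"
  by (simp add: fun_eq_iff)

lemma f2vec_add_eq_0_iff: "(x::f2vec) + y = 0 \<longleftrightarrow> x = y"
  by (metis add_left_cancel f2vec_add_self)

lemma f2vec_add_swap:
  fixes a b c d :: f2vec
  assumes "a + b = c + d"
  shows "a + c = b + d"
proof -
  have "a + c = (a + b) + (b + c)" by (metis add.assoc add.left_neutral f2vec_add_self)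
  also have "\<dots> = (c + c) + (b + d)" using assms by (simp only: ac_simps)
  also have "\<dots> = b + d" by simp
  finally show ?thesis .
qed

lemma scale2_0 [simp]: "scale2 0 x = 0" and scale2_1 [simp]: "scale2 1 x = x"
  by (simp_all add: scale2_def fun_eq_iff)

interpretation V: vector_space scale2
  by unfold_locales (auto simp: scale2_def fun_eq_iff distrib_left distrib_right)

lemma linear_scale2I:
  assumes add: "\<And>x y. f (x + y) = f x + f y"
  shows "Vector_Spaces.linear scale2 scale2 f"
proof -
  have "f 0 + 0 = f 0 + f 0" using add[of 0 0] by simp
  then have "f 0 = 0" by (rule add_left_imp_eq[symmetric])
  then have "f (scale2 c x) = scale2 c (f x)" for c x
    by (cases c) simp_all
  with add show ?thesis
    unfolding linear_iff_module_hom
    by (intro module_hom.intro V.module_axioms module_hom_axioms.intro) auto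
qed

lemma sum_fun_apply: "(\<Sum>i\<in>S. g i) x = (\<Sum>i\<in>S. g i x)"
  by (induction S rule: infinite_finite_induct) auto

lemma mvec_add: "mvec q A (x + y) = mvec q A x + mvec q A y"
  by (auto simp: mvec_def fun_eq_iff distrib_left sum.distrib)

lemma mvec_0 [simp]: "mvec q A 0 = 0"
  by (simp add: mvec_def fun_eq_iff)

lemma linear_mvec: "Vector_Spaces.linear scale2 scale2 (mvec q A)"
  by (rule linear_scale2I) (rule mvec_add)

lemma mvec_madd: "mvec q (madd A B) x = mvec q A x + mvec q B x"
  by (simp add: mvec_def madd_def fun_eq_iff distrib_right sum.distrib)

lemma mvec_mmult: "mvec q (mmult q A B) x = mvec q A (mvec q B x)"
proof -
  have "(\<Sum>j<q. (\<Sum>k<q. A i k * B k j) * x j) = (\<Sum>k<q. A i k * (\<Sum>j<q. B k j * x j))" for i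
  proof -
    have "(\<Sum>j<q. (\<Sum>k<q. A i k * B k j) * x j) = (\<Sum>j<q. \<Sum>k<q. A i k * B k j * x j)"
      by (simp add: sum_distrib_right)
    also have "\<dots> = (\<Sum>k<q. \<Sum>j<q. A i k * B k j * x j)"
      by (rule sum.swap)
    also have "\<dots> = (\<Sum>k<q. A i k * (\<Sum>j<q. B k j * x j))"
      by (simp add: sum_distrib_left mult.assoc)
    finally show ?thesis .
  qed
  then show ?thesis by (simp add: mvec_def mmult_def fun_eq_iff)
qed

text \<open>Multiplication by \<open>Q^s\<close>: coordinate \<open>i\<close> moves to \<open>i + s\<close>, and whatever
  reaches index \<open>q\<close> or beyond is lost.\<close>

definition shift_vec :: "nat \<Rightarrow> nat \<Rightarrow> f2vec \<Rightarrow> f2vec" where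
  "shift_vec q s x = (\<lambda>i. if i < q \<and> s \<le> i then x (i - s) else 0)"

lemma shift_vec_0 [simp]: "shift_vec q s 0 = 0"
  by (simp add: shift_vec_def fun_eq_iff)

lemma shift_vec_shift_vec: "shift_vec q a (shift_vec q b x) = shift_vec q (a + b) x"
  by (auto simp: shift_vec_def fun_eq_iff diff_diff_left)

lemma shift_vec_eq_shift_vec_drop:
  assumes "m \<le> n" "n \<le> q" "\<forall>i<n - m. x i = 0"
  shows "shift_vec q (q - n) x = shift_vec q (q - m) (\<lambda>j. x (j + (n - m)))"
proof
  fix i
  show "shift_vec q (q - n) x i = shift_vec q (q - m) (\<lambda>j. x (j + (n - m))) i"
    using assms by (cases "q - m \<le> i") (auto simp: shift_vec_def intro: arg_cong[where f = x])
qed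

lemma mvec_idmat: "mvec q (idmat q) x = shift_vec q 0 x"
proof -
  have "(\<Sum>j<q. idmat q i j * x j) = (\<Sum>j<q. if j = i then x j else 0)" if "i < q" for i
    using that by (intro sum.cong) (auto simp: idmat_def)
  then show ?thesis by (simp add: mvec_def shift_vec_def fun_eq_iff)
qed

lemma mvec_shiftQ: "mvec q (shiftQ q) x = shift_vec q 1 x"
proof -
  have "(\<Sum>j<q. shiftQ q i j * x j) = (\<Sum>j<q. if j = i - 1 then x j else 0)"
    if "i < q" "0 < i" for i
    using that by (intro sum.cong) (auto simp: shiftQ_def)
  moreover have "(\<Sum>j<q. shiftQ q 0 j * x j) = 0"
    by (simp add: shiftQ_def)
  ultimately show ?thesis
    by (auto simp: mvec_def shift_vec_def fun_eq_iff Suc_le_eq)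
qed

lemma mvec_mpow_shiftQ: "mvec q (mpow q (shiftQ q) s) x = shift_vec q s x"
proof (induction s)
  case 0
  show ?case by (simp add: mvec_idmat)
next
  case (Suc s)
  then show ?case by (simp add: mvec_mmult mvec_shiftQ shift_vec_shift_vec)
qed

definition supported :: "nat set \<Rightarrow> f2vec set" where
  "supported S = {x. \<forall>i. i \<notin> S \<longrightarrow> x i = 0}"

definition unit_vec :: "nat \<Rightarrow> f2vec" where
  "unit_vec i = (\<lambda>j. if j = i then 1 else 0)"

lemma vecs_eq_supported: "vecs q = supported {..<q}"
  by (auto simp: vecs_def supported_def not_less)

lemma zero_in_vecs [simp]: "0 \<in> vecs q"
  by (simp add: vecs_def)

lemma supported_add: "x \<in> supported S \<Longrightarrow> y \<in> supported S \<Longrightarrow> x + y \<in> supported S"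
  by (simp add: supported_def)

lemma supported_mono: "S \<subseteq> T \<Longrightarrow> supported S \<subseteq> supported T"
  by (auto simp: supported_def)

lemma subspace_supported: "V.subspace (supported S)"
  by (rule V.subspaceI) (auto simp: supported_def scale2_def)

lemma shift_vec_supported: "shift_vec q s x \<in> supported {s..<q}"
  by (simp add: supported_def shift_vec_def)

lemma supported_subset_span:
  assumes "finite S"
  shows "supported S \<subseteq> V.span (unit_vec ` S)"
proof
  fix x assume x: "x \<in> supported S"
  have "x = (\<Sum>i\<in>S. scale2 (x i) (unit_vec i))"
  proof
    fix j
    have "(\<Sum>i\<in>S. scale2 (x i) (unit_vec i)) j = (\<Sum>i\<in>S. if i = j then x j else 0)"
      unfolding sum_fun_apply by (intro sum.cong) (auto simp: scale2_def unit_vec_def)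
    also have "\<dots> = x j" using x assms by (auto simp: supported_def)
    finally show "x j = (\<Sum>i\<in>S. scale2 (x i) (unit_vec i)) j" by simp
  qed
  also have "\<dots> \<in> V.span (unit_vec ` S)"
    by (intro V.span_sum V.span_scale V.span_base) auto
  finally show "x \<in> V.span (unit_vec ` S)" .
qed

lemma independent_unit_vec: "V.independent (unit_vec ` S)"
  unfolding V.dependent_def
proof clarify
  fix t assume "unit_vec t \<in> V.span (unit_vec ` S - {unit_vec t})"
  then have "(\<lambda>x. x t = 0) (unit_vec t)"
  proof (induction rule: V.span_induct)
    case base
    show ?case by (rule V.subspaceI) (auto simp: scale2_def)
  qed (auto simp: unit_vec_def)
  then show False by (simp add: unit_vec_def)
qed

lemma dim_supported:
  assumes "finite S"
  shows "V.dim (supported S) = card S"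
proof -
  have "inj unit_vec" by (auto simp: inj_def unit_vec_def fun_eq_iff)
  then have "card (unit_vec ` S) = card S" by (simp add: card_image inj_on_subset)
  moreover have "unit_vec ` S \<subseteq> supported S" by (auto simp: supported_def unit_vec_def)
  ultimately show ?thesis
    using V.dim_unique[OF _ supported_subset_span[OF assms] independent_unit_vec] by simp
qed

lemma dim_le_card_supported:
  assumes X: "V.subspace X" and f: "Vector_Spaces.linear scale2 scale2 f"
    and ker: "\<And>x. x \<in> X \<Longrightarrow> f x = 0 \<Longrightarrow> x = 0"
    and img: "f ` X \<subseteq> supported S" and S: "finite S"
  shows "V.dim X \<le> card S"
proof -
  interpret f: Vector_Spaces.linear scale2 scale2 f by (rule f)
  have inj: "inj_on f X" using f.inj_on_iff_eq_0[OF X] ker by blast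
  obtain B where B: "B \<subseteq> X" "V.independent B" "X \<subseteq> V.span B" "card B = V.dim X"
    using V.basis_exists by blast
  have "V.span B \<subseteq> X" using B(1) X by (rule V.span_minimal)
  then have injB: "inj_on f (V.span B)" using inj inj_on_subset by blast
  have "V.independent (f ` B)" by (rule f.independent_injective_image[OF B(2) injB])
  moreover have "f ` B \<subseteq> V.span (unit_vec ` S)"
    using B(1) img supported_subset_span[OF S] by blast
  ultimately have "card (f ` B) \<le> card (unit_vec ` S)"
    using V.independent_span_bound[OF finite_imageI[OF S]] by blast
  also have "\<dots> \<le> card S" by (rule card_image_le[OF S])
  finally show ?thesis
    using B(4) card_image[OF inj_on_subset[OF injB V.span_superset]] by simp
qed

lemma qdim_ge:
  "n1 \<le> qdim n1 n2 n3 n4 m" "n2 \<le> qdim n1 n2 n3 n4 m" "n3 \<le> qdim n1 n2 n3 n4 m"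
  "n4 \<le> qdim n1 n2 n3 n4 m" "m \<le> qdim n1 n2 n3 n4 m"
  by (auto simp: qdim_def)

lemma mvec_GS:
  assumes "q = qdim n1 n2 n3 n4 m"
  shows "mvec q (GS n1 n2 n3 n4 m GA GB) x =
    shift_vec q (q - n3) (mvec q GA (shift_vec q (q - n1) x)) +
    shift_vec q (q - n4) (mvec q GB (shift_vec q (q - n2) x))"
  by (simp add: GS_def Let_def assms[symmetric] mvec_madd mvec_mmult mvec_mpow_shiftQ)

lemma mvec_GM:
  assumes "q = qdim n1 n2 n3 n4 m"
  shows "mvec q (GM n1 n2 n3 n4 m GA GB) z =
    shift_vec q (q - n3) (mvec q GA (shift_vec q (q - m) z)) +
    shift_vec q (q - n4) (mvec q GB (shift_vec q (q - m) z))"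
  by (simp add: GM_def Let_def assms[symmetric] mvec_madd mvec_mmult mvec_mpow_shiftQ)

lemma good_subspace_iff:
  "good_subspace q Gs Gm X \<longleftrightarrow> X \<subseteq> vecs q \<and> V.subspace X \<and>
     (\<forall>x\<in>X. \<forall>z\<in>vecs q. mvec q Gs x = mvec q Gm z \<longrightarrow> x = 0)"
  (is "_ \<longleftrightarrow> ?sub \<and> ?lin \<and> ?ker")
proof
  assume good: "good_subspace q Gs Gm X"
  then have "?sub" "?lin" by (simp_all add: good_subspace_def)
  moreover have "x = 0" if "x \<in> X" "z \<in> vecs q" "mvec q Gs x = mvec q Gm z" for x z
  proof -
    have "mvec q Gs x + mvec q Gm 0 = mvec q Gs 0 + mvec q Gm z" using that(3) by simp
    moreover have "0 \<in> X" "0 \<in> vecs q" using \<open>?lin\<close> V.subspace_0 by (auto simp: vecs_def)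
    ultimately show "x = 0" using good that unfolding good_subspace_def by blast
  qed
  ultimately show "?sub \<and> ?lin \<and> ?ker" by blast
next
  assume sub: "?sub \<and> ?lin \<and> ?ker"
  have "xs = xs'" if "xs \<in> X" "xs' \<in> X" "xm \<in> vecs q" "xm' \<in> vecs q"
    and eq: "mvec q Gs xs + mvec q Gm xm = mvec q Gs xs' + mvec q Gm xm'" for xs xs' xm xm'
  proof -
    have "mvec q Gs (xs + xs') = mvec q Gm (xm + xm')"
      using f2vec_add_swap[OF eq] by (simp add: mvec_add add.commute)
    moreover have "xs + xs' \<in> X" using sub that V.subspace_add by blast
    moreover have "xm + xm' \<in> vecs q" using that by (simp add: vecs_eq_supported supported_add)
    ultimately have "xs + xs' = 0" using sub by blast
    then show ?thesis by (simp only: f2vec_add_eq_0_iff)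
  qed
  with sub show "good_subspace q Gs Gm X" by (auto simp: good_subspace_def)
qed

lemma good_subspaceD:
  assumes "good_subspace q Gs Gm X"
  shows "X \<subseteq> vecs q" "V.subspace X"
    "\<And>x z. x \<in> X \<Longrightarrow> z \<in> vecs q \<Longrightarrow> mvec q Gs x = mvec q Gm z \<Longrightarrow> x = 0"
  using assms unfolding good_subspace_iff by blast+

lemma good_subspace_0: "good_subspace q Gs Gm {0}"
  by (simp add: good_subspace_iff vecs_def V.subspace_single_0)

lemma dim_good_subspace_le_diff:
  assumes q: "q = qdim n1 n2 n3 n4 m" and "n1 = n2" "m < n1"
    and good: "good_subspace q (GS n1 n2 n3 n4 m GA GB) (GM n1 n2 n3 n4 m GA GB) X"
  shows "V.dim X \<le> n1 - m"
proof -
  define keep :: "f2vec \<Rightarrow> f2vec" where "keep x = (\<lambda>i. if i < n1 - m then x i else 0)" for x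
  have "V.dim X \<le> card {..<n1 - m}"
  proof (rule dim_le_card_supported)
    show "V.subspace X" by (rule good_subspaceD(2)[OF good])
    show "Vector_Spaces.linear scale2 scale2 keep"
      by (rule linear_scale2I) (simp add: keep_def fun_eq_iff)
    show "keep ` X \<subseteq> supported {..<n1 - m}" by (auto simp: keep_def supported_def)
  next
    fix x assume x: "x \<in> X" and "keep x = 0"
    then have low: "\<forall>i<n1 - m. x i = 0" by (metis keep_def zero_fun_def)
    define z where "z j = x (j + (n1 - m))" for j
    have "z \<in> vecs q" using x good_subspaceD(1)[OF good] by (auto simp: vecs_def z_def)
    moreover have "shift_vec q (q - n1) x = shift_vec q (q - m) z"
      unfolding z_def using shift_vec_eq_shift_vec_drop low qdim_ge q assms(3) by simp
    then have "mvec q (GS n1 n2 n3 n4 m GA GB) x = mvec q (GM n1 n2 n3 n4 m GA GB) z"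
      by (simp add: mvec_GS mvec_GM q \<open>n1 = n2\<close>[symmetric])
    ultimately show "x = 0" by (rule good_subspaceD(3)[OF good x])
  qed simp
  then show ?thesis by simp
qed

lemma dim_good_subspace_le_max:
  assumes q: "q = qdim n1 n2 n3 n4 m"
    and good: "good_subspace q (GS n1 n2 n3 n4 m GA GB) (GM n1 n2 n3 n4 m GA GB) X"
  shows "V.dim X \<le> max n3 n4"
proof -
  have "V.dim X \<le> card {q - max n3 n4..<q}"
  proof (rule dim_le_card_supported[OF _ linear_mvec])
    show "V.subspace X" by (rule good_subspaceD(2)[OF good])
    show "x = 0" if "x \<in> X" "mvec q (GS n1 n2 n3 n4 m GA GB) x = 0" for x
      using good_subspaceD(3)[OF good that(1) zero_in_vecs] that(2) by simp
    have "supported {q - n3..<q} \<subseteq> supported {q - max n3 n4..<q}"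
      "supported {q - n4..<q} \<subseteq> supported {q - max n3 n4..<q}"
      by (intro supported_mono; auto)+
    then show "mvec q (GS n1 n2 n3 n4 m GA GB) ` X \<subseteq> supported {q - max n3 n4..<q}"
      using shift_vec_supported by (auto simp: mvec_GS q intro!: supported_add)
  qed simp
  then show ?thesis using qdim_ge q by simp
qed

lemma Max_le_nat:
  fixes A :: "nat set"
  assumes "A \<noteq> {}" "\<And>a. a \<in> A \<Longrightarrow> a \<le> k"
  shows "Max A \<le> k"
  using assms by (meson Max.boundedI finite_nat_set_iff_bounded_le)

lemma Max_eq_nat:
  fixes A :: "nat set"
  assumes "k \<in> A" "\<And>a. a \<in> A \<Longrightarrow> a \<le> k"
  shows "Max A = k"
  using assms by (meson Max_eqI finite_nat_set_iff_bounded_le)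

lemma rate_le:
  assumes "n1 = n2" "m < n1"
  shows "rate n1 n2 n3 n4 m GA GB \<le> min (n1 - m) (max n3 n4)"
  unfolding rate_def Let_def
  using good_subspace_0 dim_good_subspace_le_diff[OF refl assms] dim_good_subspace_le_max[OF refl]
  by (intro Max_le_nat) auto

definition select_mat :: "nat \<Rightarrow> nat \<Rightarrow> f2mat" where
  "select_mat k s = (\<lambda>i j. if i < k \<and> j = i + s then 1 else 0)"

lemma select_mat_in_mats: "k + s \<le> q \<Longrightarrow> select_mat k s \<in> mats q"
  by (auto simp: mats_def select_mat_def)

lemma mvec_select_mat:
  assumes "k + s \<le> q"
  shows "mvec q (select_mat k s) y = (\<lambda>i. if i < k then y (i + s) else 0)"
proof -
  have "(\<Sum>j<q. select_mat k s i j * y j) = (\<Sum>j<q. if j = i + s then y j else 0)" if "i < k" for i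
    using that by (intro sum.cong) (auto simp: select_mat_def)
  then show ?thesis using assms by (auto simp: mvec_def select_mat_def fun_eq_iff)
qed

lemma mvec_zero_mat [simp]: "mvec q (\<lambda>i j. 0) y = 0"
  by (simp add: mvec_def fun_eq_iff)

lemma select_mat_shift_vec:
  assumes "k \<le> n" "n \<le> q" "x \<in> supported {..<k}"
  shows "mvec q (select_mat k (q - n)) (shift_vec q (q - n) x) = x"
  using assms by (auto simp: mvec_select_mat shift_vec_def supported_def fun_eq_iff)

lemma select_mat_shift_vec_eq_0:
  assumes "k + m \<le> n" "n \<le> q"
  shows "mvec q (select_mat k (q - n)) (shift_vec q (q - m) z) = 0"
  using assms by (auto simp: mvec_select_mat shift_vec_def fun_eq_iff)

lemma shift_vec_eq_0_imp:
  assumes "k \<le> n" "n \<le> q" "x \<in> supported {..<k}" "shift_vec q (q - n) x = 0"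
  shows "x = 0"
proof
  fix i
  show "x i = 0 i"
  proof (cases "i < k")
    case True
    then have "i + (q - n) < q" using assms(1,2) by linarith
    then have "x i = shift_vec q (q - n) x (i + (q - n))" by (simp add: shift_vec_def)
    then show ?thesis using assms(4) by simp
  qed (use assms(3) in \<open>simp add: supported_def\<close>)
qed

lemma rate_eq_of_forwarding:
  assumes q: "q = qdim n1 n2 n3 n4 m" and "n1 = n2" "m < n1"
    and k: "k = min (n1 - m) (max n3 n4)"
    and GS: "\<And>x. x \<in> supported {..<k} \<Longrightarrow>
      mvec q (GS n1 n2 n3 n4 m GA GB) x = shift_vec q (q - max n3 n4) x"
    and GM: "\<And>z. mvec q (GM n1 n2 n3 n4 m GA GB) z = 0"
  shows "rate n1 n2 n3 n4 m GA GB = k"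
proof -
  have kq: "k \<le> max n3 n4" "max n3 n4 \<le> q" using k qdim_ge q by auto
  have "good_subspace q (GS n1 n2 n3 n4 m GA GB) (GM n1 n2 n3 n4 m GA GB) (supported {..<k})"
    unfolding good_subspace_iff
  proof (intro conjI ballI impI subspace_supported)
    show "supported {..<k} \<subseteq> vecs q"
      unfolding vecs_eq_supported using kq by (intro supported_mono) auto
    show "x = 0" if "x \<in> supported {..<k}"
      and "mvec q (GS n1 n2 n3 n4 m GA GB) x = mvec q (GM n1 n2 n3 n4 m GA GB) z" for x z
      using shift_vec_eq_0_imp[OF kq that(1)] that GS GM by simp
  qed
  moreover have "V.dim (supported {..<k}) = k" by (simp add: dim_supported)
  ultimately have
    "k \<in> {V.dim X | X. good_subspace q (GS n1 n2 n3 n4 m GA GB) (GM n1 n2 n3 n4 m GA GB) X}"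
    by (metis (mono_tags, lifting) mem_Collect_eq)
  then show ?thesis
    unfolding rate_def Let_def q[symmetric]
    using dim_good_subspace_le_diff[OF q assms(2,3)] dim_good_subspace_le_max[OF q] k
    by (intro Max_eq_nat) auto
qed

lemma forwarding_relays_exist:
  fixes n1 n2 n3 n4 m :: nat
  assumes "n1 = n2" "m < n1"
  shows "\<exists>GA\<in>mats (qdim n1 n2 n3 n4 m). \<exists>GB\<in>mats (qdim n1 n2 n3 n4 m).
    rate n1 n2 n3 n4 m GA GB = min (n1 - m) (max n3 n4)"
proof -
  define q where "q = qdim n1 n2 n3 n4 m"
  define k where "k = min (n1 - m) (max n3 n4)"
  define P where "P = select_mat k (q - n1)"
  have n: "k + m \<le> n1" "k \<le> n1" "n1 \<le> q" "n3 \<le> q" "n4 \<le> q"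
    using assms(2) qdim_ge by (auto simp: k_def q_def)
  have P: "P \<in> mats q" "(\<lambda>i j. 0) \<in> mats q"
    unfolding P_def using n by (intro select_mat_in_mats) (auto simp: mats_def)
  have src: "mvec q P (shift_vec q (q - n1) x) = x" if "x \<in> supported {..<k}" for x
    using select_mat_shift_vec[OF n(2,3) that] by (simp add: P_def)
  have dist: "mvec q P (shift_vec q (q - m) z) = 0" for z
    using select_mat_shift_vec_eq_0[OF n(1,3)] by (simp add: P_def)
  have GS: "mvec q (GS n1 n2 n3 n4 m GA GB) x =
      shift_vec q (q - n3) (mvec q GA (shift_vec q (q - n1) x)) +
      shift_vec q (q - n4) (mvec q GB (shift_vec q (q - n1) x))" for GA GB x
    using mvec_GS[OF q_def] assms(1) by simp
  note GM = mvec_GM[OF q_def]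
  show ?thesis
  proof (cases "n4 \<le> n3")
    case True
    then have "rate n1 n2 n3 n4 m P (\<lambda>i j. 0) = k"
      by (intro rate_eq_of_forwarding[OF q_def assms(1,2) k_def])
        (simp_all add: GS GM src dist max_def)
    then show ?thesis using P k_def q_def by blast
  next
    case False
    then have "rate n1 n2 n3 n4 m (\<lambda>i j. 0) P = k"
      by (intro rate_eq_of_forwarding[OF q_def assms(1,2) k_def])
        (simp_all add: GS GM src dist max_def)
    then show ?thesis using P k_def q_def by blast
  qed
qed

theorem mainTheorem9:
  fixes n1 n2 n3 n4 m :: nat
  assumes "n1 = n2" and "m < n1"
  shows "linear_capacity n1 n2 n3 n4 m = min (n1 - m) (max n3 n4)"
proof -
  obtain GA GB where "GA \<in> mats (qdim n1 n2 n3 n4 m)" "GB \<in> mats (qdim n1 n2 n3 n4 m)"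
    and "rate n1 n2 n3 n4 m GA GB = min (n1 - m) (max n3 n4)"
    using forwarding_relays_exist[OF assms] by blast
  then show ?thesis
    unfolding linear_capacity_def using rate_le[OF assms]
    by (intro Max_eq_nat) (force, auto)
qed

end
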